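(* Let $X$ be a non-negative random variable, $\rho\ge0$, and $Y\sim\mathrm{MPo}(\rho X)$. Then the moments of $Y$ satisfy Carleman's condition if and only if the moments of $X$ do. Moreover, $\psi(z)=\mathbb{E}(e^{zX})$ exists in a neighbourhood of $0$ if and only if $\varphi(z)=\mathbb{E}(e^{zY})$ exists in a neighbourhood of $0$.
   Context: For non-negative $X$ and $\rho\ge0$, $Y\sim\mathrm{MPo}(\rho X)$ means $Y$ takes values in $\{0,1,2,\dots\}$ with $\mathbb{P}\{Y=\ell\}=\frac{\rho^\ell}{\ell!}\mathbb{E}(X^\ell e^{-\rho X})$. A random variable $Z$ with moments $m_s=\mathbb{E}(Z^s)$ satisfies Carleman's condition if $\sum_{s\ge1}m_{2s}^{-1/(2s)}=\infty$. *)

theory Defs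
  imports "HOL-Probability.Probability"
begin

definition moment :: "'a measure \<Rightarrow> ('a \<Rightarrow> real) \<Rightarrow> nat \<Rightarrow> real" where
  "moment M Z s = (\<integral>x. Z x ^ s \<partial>M)"

text \<open>Carleman's condition: all moments are finite and
  sum over s >= 1 of m_(2s)^(-1/(2s)) diverges (with the convention 0^(-a) = +infinity,
  i.e. a vanishing even moment makes the series diverge).\<close>
definition carleman :: "'a measure \<Rightarrow> ('a \<Rightarrow> real) \<Rightarrow> bool" where
  "carleman M Z \<longleftrightarrow>
     (\<forall>s. integrable M (\<lambda>x. Z x ^ s)) \<and>
     ((\<exists>s. moment M Z (2 * Suc s) = 0) \<or>
      \<not> summable (\<lambda>s. moment M Z (2 * Suc s) powr (- 1 / real (2 * Suc s))))"

definition mgf_exists_near_0 :: "'a measure \<Rightarrow> ('a \<Rightarrow> real) \<Rightarrow> bool" where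
  "mgf_exists_near_0 M Z \<longleftrightarrow>
     (\<exists>\<epsilon>>0. \<forall>z. \<bar>z\<bar> < \<epsilon> \<longrightarrow> integrable M (\<lambda>x. exp (z * Z x)))"

definition mixed_poisson :: "'a measure \<Rightarrow> ('a \<Rightarrow> real) \<Rightarrow> real \<Rightarrow> 'b measure \<Rightarrow> ('b \<Rightarrow> nat) \<Rightarrow> bool" where
  "mixed_poisson M X \<rho> N Y \<longleftrightarrow>
     Y \<in> measurable N (count_space UNIV) \<and>
     (\<forall>l. measure N {\<omega> \<in> space N. Y \<omega> = l} =
            \<rho> ^ l / fact l * (\<integral>x. X x ^ l * exp (- \<rho> * X x) \<partial>M))"

end

theory Submission
  imports Defs
begin

text \<open>Given X, the variable Y is Poisson with mean \<rho>X, and the n-th moment of a Poisson variable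
  with mean t lies between t^n and (t+n)^n. Hence \<rho>^n E X^n \<le> E Y^n \<le> 2^n (\<rho>^n E X^n + n^n):
  all moments are finite simultaneously, and the n-th root of E Y^n is squeezed between
  \<rho> (E X^n)^(1/n) and a constant times max((E X^n)^(1/n), n). By Lyapunov's inequality the roots
  (E X^n)^(1/n) increase, and for an increasing sequence a_n the series of 1/a_n and of
  1/max(a_n, n) converge together; so the Carleman series of X and Y converge together.
  For the moment generating functions, E e^(zY) = E e^((e^z - 1)\<rho>X), and z \<mapsto> (e^z - 1)\<rho> maps
  the positive reals onto the positive reals; for nonnegative variables only positive arguments
  matter.\<close>

lemma power_add_le_two_pow:
  fixes x y :: real
  assumes "x \<ge> 0" "y \<ge> 0"
  shows "(x + y) ^ n \<le> 2 ^ n * (x ^ n + y ^ n)"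
proof -
  have "(x + y) ^ n \<le> (2 * max x y) ^ n"
    using assms by (intro power_mono) auto
  also have "\<dots> \<le> 2 ^ n * (x ^ n + y ^ n)"
    using assms by (auto simp: power_mult_distrib max_def)
  finally show ?thesis .
qed

lemma add_pow_le_pow_add:
  fixes x y :: real
  assumes "x \<ge> 0" "y \<ge> 0" "n \<ge> 1"
  shows "x ^ n + y ^ n \<le> (x + y) ^ n"
proof -
  obtain m where n: "n = Suc m"
    using assms(3) by (cases n) auto
  have "x * x ^ m + y * y ^ m \<le> x * (x + y) ^ m + y * (x + y) ^ m"
    using assms by (intro add_mono mult_left_mono power_mono) auto
  then show ?thesis
    by (simp add: n distrib_right)
qed

lemma powr_minus_inverse_eq_inverse_root:
  assumes "x > 0" "n > 0"
  shows "x powr (- 1 / real n) = 1 / root n x"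
  using assms by (simp add: root_powr_inverse powr_minus_divide)

lemma nonneg_power_powr:
  assumes "(x::real) \<ge> 0" "j \<ge> 1" shows "\<bar>x ^ j\<bar> powr (real k / real j) = x powr real k"
  using assms by (cases "x = 0") (auto simp: powr_realpow[symmetric] powr_powr)

lemma convex_on_abs_powr:
  assumes "p \<ge> 1" shows "convex_on UNIV (\<lambda>x::real. \<bar>x\<bar> powr p)"
proof (rule convex_onI)
  fix t x y :: real assume t: "0 < t" "t < 1"
  have powr_comb: "((1 - t) * a + t * b) powr p \<le> (1 - t) * a powr p + t * b powr p"
    if "a \<ge> 0" "b \<ge> 0" for a b
  proof (cases "a = 0 \<or> b = 0")
    case True
    have "s powr p \<le> s" if "0 \<le> s" "s \<le> 1" for s :: real
      using that assms by (cases "s = 0") (auto intro: powr_le_one_le)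
    then have "t powr p \<le> t" "(1 - t) powr p \<le> 1 - t"
      using t by auto
    then show ?thesis
      using True that t by (auto simp: powr_mult intro!: mult_right_mono)
  next
    case False
    then show ?thesis
      using convex_onD[OF powr_convex[OF assms], of t a b] that t by auto
  qed
  have "\<bar>(1 - t) * x + t * y\<bar> \<le> (1 - t) * \<bar>x\<bar> + t * \<bar>y\<bar>"
    using t abs_triangle_ineq[of "(1 - t) * x" "t * y"] by (simp add: abs_mult)
  then have "\<bar>(1 - t) * x + t * y\<bar> powr p \<le> ((1 - t) * \<bar>x\<bar> + t * \<bar>y\<bar>) powr p"
    using assms by (intro powr_mono2) auto
  also have "\<dots> \<le> (1 - t) * \<bar>x\<bar> powr p + t * \<bar>y\<bar> powr p"
    by (rule powr_comb) auto
  finally show "\<bar>(1 - t) *\<^sub>R x + t *\<^sub>R y\<bar> powr p \<le> (1 - t) * \<bar>x\<bar> powr p + t * \<bar>y\<bar> powr p"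
    by simp
qed auto

section \<open>Comparison of series\<close>

lemma summable_of_summable_min_harmonic:
  fixes v :: "nat \<Rightarrow> real"
  assumes pos: "\<And>s. v s > 0" and anti: "antimono v"
    and sum_min: "summable (\<lambda>s. min (v s) (1 / real (Suc s)))"
  shows "summable v"
proof -
  txt \<open>Cauchy condensation applies to the antitone w; as 2^n w(2^n) \<rightarrow> 0, the sequences w and v
    agree at all large powers of two.\<close>
  define w where "w = (\<lambda>s. min (v s) (1 / real (Suc s)))"
  have "1 / real (Suc (Suc m)) \<le> 1 / real (Suc m)" for m
    by (rule frac_le) auto
  then have w_anti: "w (Suc m) \<le> w m" for m
    unfolding w_def by (intro min.mono antimonoD[OF anti]) auto
  have "w n \<ge> 0" for n
    using pos[of n] by (simp add: w_def)
  then have "summable w \<longleftrightarrow> summable (\<lambda>n. 2 ^ n * w (2 ^ n))"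
    using w_anti by (intro condensation_test)
  then have w_condensed: "summable (\<lambda>n. 2 ^ n * w (2 ^ n))"
    using sum_min by (simp add: w_def)
  then have "(\<lambda>n. 2 ^ n * w (2 ^ n)) \<longlonglongrightarrow> 0"
    by (rule summable_LIMSEQ_zero)
  then have "eventually (\<lambda>n. 2 ^ n * w (2 ^ n) < 1 / 2) sequentially"
    by (rule order_tendstoD) simp
  then have agree: "eventually (\<lambda>n. 2 ^ n * w (2 ^ n) = 2 ^ n * v (2 ^ n)) sequentially"
  proof (rule eventually_mono)
    fix n :: nat assume small: "2 ^ n * w (2 ^ n) < 1 / 2"
    have "real (Suc (2 ^ n)) \<le> 2 * 2 ^ n"
      by simp
    then have "(2::real) ^ n * (1 / real (Suc (2 ^ n))) \<ge> 1 / 2"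
      by (simp add: le_divide_eq add_pos_nonneg)
    with small have "w (2 ^ n) < 1 / real (Suc (2 ^ n))"
      by (smt (verit) mult_left_mono zero_le_power)
    then have "v (2 ^ n) < 1 / real (Suc (2 ^ n))"
      unfolding w_def by (simp only: min_less_iff_disj) simp
    then show "2 ^ n * w (2 ^ n) = 2 ^ n * v (2 ^ n)"
      unfolding w_def by (simp only: min.absorb1 less_imp_le)
  qed
  have "v (Suc m) \<le> v m" for m
    using antimonoD[OF anti, of m "Suc m"] by simp
  then have "summable v \<longleftrightarrow> summable (\<lambda>n. 2 ^ n * v (2 ^ n))"
    using pos by (intro condensation_test) (auto intro: less_imp_le)
  also have "\<dots>"
    using w_condensed summable_cong[OF agree] by simp
  finally show ?thesis .
qed

lemma summable_inverse_iff_of_comparable: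
  fixes \<alpha> \<beta> :: "nat \<Rightarrow> real"
  assumes \<alpha>: "\<And>s. \<alpha> s > 0" "mono \<alpha>"
    and lower: "c > 0" "\<And>s. c * \<alpha> s \<le> \<beta> s"
    and upper: "\<And>s. \<beta> s \<le> C * max (\<alpha> s) (real (Suc s))"
  shows "summable (\<lambda>s. 1 / \<beta> s) \<longleftrightarrow> summable (\<lambda>s. 1 / \<alpha> s)"
proof -
  have \<beta>: "\<beta> s > 0" for s
    using lower \<alpha>(1)[of s] by (meson less_le_trans mult_pos_pos)
  have "0 < C * max (\<alpha> 0) (real (Suc 0))"
    using \<beta>[of 0] upper[of 0] by linarith
  then have C: "C > 0"
    by (simp add: zero_less_mult_iff)
  show ?thesis
  proof
    assume "summable (\<lambda>s. 1 / \<beta> s)"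
    then have sum_C: "summable (\<lambda>s. C * (1 / \<beta> s))"
      by (rule summable_mult)
    have bound: "\<bar>min (1 / \<alpha> s) (1 / real (Suc s))\<bar> \<le> C * (1 / \<beta> s)" for s
    proof -
      have "min (1 / \<alpha> s) (1 / real (Suc s)) \<le> 1 / max (\<alpha> s) (real (Suc s))"
        by (cases "\<alpha> s \<le> real (Suc s)") (simp_all add: max_def)
      also have "\<dots> = C / (C * max (\<alpha> s) (real (Suc s)))"
        using C by simp
      also have "\<dots> \<le> C / \<beta> s"
        using upper[of s] \<beta>[of s] C by (intro frac_le) auto
      finally show ?thesis
        using \<alpha>(1)[of s] by simp
    qed
    have sum_min: "summable (\<lambda>s. min (1 / \<alpha> s) (1 / real (Suc s)))"
      by (rule summable_comparison_test'[where N = 0, OF sum_C]) (use bound in simp)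
    have anti: "antimono (\<lambda>s. 1 / \<alpha> s)"
    proof (rule antimonoI)
      fix s t :: nat assume "s \<le> t"
      then have "\<alpha> s \<le> \<alpha> t"
        by (rule monoD[OF \<alpha>(2)])
      then show "1 / \<alpha> t \<le> 1 / \<alpha> s"
        using frac_le[of 1 1 "\<alpha> s" "\<alpha> t"] \<alpha>(1)[of s] by simp
    qed
    show "summable (\<lambda>s. 1 / \<alpha> s)"
      using \<alpha>(1) by (intro summable_of_summable_min_harmonic[OF _ anti sum_min]) simp
  next
    assume "summable (\<lambda>s. 1 / \<alpha> s)"
    then have sum_c: "summable (\<lambda>s. 1 / (c * \<alpha> s))"
      using summable_mult[of "\<lambda>s. 1 / \<alpha> s" "1 / c"] by simp
    have bound: "\<bar>1 / \<beta> s\<bar> \<le> 1 / (c * \<alpha> s)" for s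
    proof -
      have "1 / \<beta> s \<le> 1 / (c * \<alpha> s)"
        using frac_le[of 1 1 "c * \<alpha> s" "\<beta> s"] lower \<alpha>(1)[of s] by simp
      then show ?thesis
        using \<beta>[of s] by simp
    qed
    show "summable (\<lambda>s. 1 / \<beta> s)"
      by (rule summable_comparison_test'[where N = 0, OF sum_c]) (use bound in simp)
  qed
qed

section \<open>Poisson moments\<close>

definition poisson_prob :: "real \<Rightarrow> nat \<Rightarrow> real" where
  "poisson_prob t l = t ^ l / fact l * exp (- t)"

lemma poisson_prob_nonneg: "t \<ge> 0 \<Longrightarrow> poisson_prob t l \<ge> 0"
  by (simp add: poisson_prob_def)

lemma poisson_prob_le_1:
  assumes "t \<ge> 0" shows "poisson_prob t l \<le> 1"
proof -
  have exp_series: "(\<lambda>k. t ^ k / fact k) sums exp t"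
    using exp_converges[of t] by (simp add: divide_inverse mult.commute)
  have "t ^ l / fact l \<le> exp t"
    using assms sum_le_suminf[OF sums_summable[OF exp_series], of "{l}"]
    by (simp add: sums_unique[OF exp_series])
  then have "poisson_prob t l \<le> exp t * exp (- t)"
    unfolding poisson_prob_def by (intro mult_right_mono) auto
  then show ?thesis by (simp add: exp_minus)
qed

lemma poisson_generating_function:
  assumes "t \<ge> 0" "u \<ge> 0"
  shows "(\<Sum>l. ennreal (u ^ l * poisson_prob t l)) = ennreal (exp ((u - 1) * t))"
proof -
  have "(\<lambda>l. exp (- t) * ((u * t) ^ l / fact l)) sums (exp (- t) * exp (u * t))"
    using exp_converges[of "u * t"] by (intro sums_mult) (simp add: divide_inverse mult.commute)
  moreover have "exp (- t) * exp (u * t) = exp ((u - 1) * t)"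
    by (simp add: exp_add[symmetric] algebra_simps)
  ultimately have "(\<lambda>l. u ^ l * poisson_prob t l) sums exp ((u - 1) * t)"
    by (simp add: poisson_prob_def power_mult_distrib mult_ac)
  then show ?thesis
    using assms by (intro suminf_ennreal_eq) (auto simp: poisson_prob_nonneg)
qed

lemma poisson_series_shift:
  assumes "t \<ge> 0" and "\<And>l. g l \<ge> 0"
  shows "(\<Sum>l. ennreal (real l * g l * poisson_prob t l))
       = ennreal t * (\<Sum>l. ennreal (g (Suc l) * poisson_prob t l))"
proof -
  have step: "real (Suc l) * g (Suc l) * poisson_prob t (Suc l) = t * (g (Suc l) * poisson_prob t l)" for l
  proof -
    have "real (Suc l) * t ^ Suc l / fact (Suc l) = t * (t ^ l / fact l)"
      by (simp add: fact_Suc del: of_nat_Suc)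
    then show ?thesis by (simp add: poisson_prob_def mult_ac)
  qed
  have "(\<Sum>l. ennreal (real l * g l * poisson_prob t l))
      = (\<Sum>l. ennreal (real (Suc l) * g (Suc l) * poisson_prob t (Suc l)))"
    by (subst suminf_offset[where i = 1]) auto
  also have "\<dots> = (\<Sum>l. ennreal t * ennreal (g (Suc l) * poisson_prob t l))"
    unfolding step using assms by (subst ennreal_mult) (auto simp: poisson_prob_nonneg)
  finally show ?thesis by (simp add: ennreal_suminf_cmult)
qed

text \<open>E((N + a)^n) for N Poisson with mean t; the shift a is what makes the moments satisfy
  a recurrence in n.\<close>

definition poisson_shifted_moment :: "real \<Rightarrow> nat \<Rightarrow> real \<Rightarrow> ennreal" where
  "poisson_shifted_moment a n t = (\<Sum>l. ennreal ((real l + a) ^ n * poisson_prob t l))"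

lemma poisson_shifted_moment_0: "t \<ge> 0 \<Longrightarrow> poisson_shifted_moment a 0 t = 1"
  using poisson_generating_function[of t 1] by (simp add: poisson_shifted_moment_def)

lemma poisson_shifted_moment_Suc:
  assumes "a \<ge> 0" "t \<ge> 0"
  shows "poisson_shifted_moment a (Suc n) t
       = ennreal t * poisson_shifted_moment (a + 1) n t + ennreal a * poisson_shifted_moment a n t"
proof -
  have split: "ennreal ((real l + a) ^ Suc n * poisson_prob t l)
      = ennreal (real l * (real l + a) ^ n * poisson_prob t l)
        + ennreal a * ennreal ((real l + a) ^ n * poisson_prob t l)" for l
    using assms
    by (simp add: ennreal_mult[symmetric] ennreal_plus[symmetric] poisson_prob_nonneg
        algebra_simps del: ennreal_plus)
  have "poisson_shifted_moment a (Suc n) t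
      = (\<Sum>l. ennreal (real l * (real l + a) ^ n * poisson_prob t l))
        + (\<Sum>l. ennreal a * ennreal ((real l + a) ^ n * poisson_prob t l))"
    unfolding poisson_shifted_moment_def split by (rule suminf_add[symmetric]) auto
  also have "(\<Sum>l. ennreal (real l * (real l + a) ^ n * poisson_prob t l))
      = ennreal t * poisson_shifted_moment (a + 1) n t"
    using assms by (subst poisson_series_shift) (auto simp: poisson_shifted_moment_def add_ac)
  finally show ?thesis
    by (simp add: poisson_shifted_moment_def ennreal_suminf_cmult)
qed

lemma poisson_shifted_moment_bounds:
  assumes "a \<ge> 0" "t \<ge> 0"
  shows "ennreal ((t + a) ^ n) \<le> poisson_shifted_moment a n t
       \<and> poisson_shifted_moment a n t \<le> ennreal ((t + a + n) ^ n)"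
  using assms(1)
proof (induction n arbitrary: a)
  case 0
  then show ?case using assms by (simp add: poisson_shifted_moment_0)
next
  case (Suc n)
  let ?S = "poisson_shifted_moment"
  have IH: "ennreal ((t + a) ^ n) \<le> ?S a n t" "?S a n t \<le> ennreal ((t + a + n) ^ n)"
    "ennreal ((t + a + 1) ^ n) \<le> ?S (a + 1) n t" "?S (a + 1) n t \<le> ennreal ((t + a + 1 + n) ^ n)"
    using Suc.IH[of a] Suc.IH[of "a + 1"] Suc.prems by (auto simp: add_ac)
  have rec: "?S a (Suc n) t = ennreal t * ?S (a + 1) n t + ennreal a * ?S a n t"
    by (rule poisson_shifted_moment_Suc[OF Suc.prems assms(2)])
  have "ennreal ((t + a) ^ Suc n) = ennreal t * ennreal ((t + a) ^ n) + ennreal a * ennreal ((t + a) ^ n)"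
    using Suc.prems assms
    by (simp add: ennreal_mult[symmetric] ennreal_plus[symmetric] algebra_simps del: ennreal_plus)
  also have "\<dots> \<le> ennreal t * ?S (a + 1) n t + ennreal a * ?S a n t"
  proof (intro add_mono mult_left_mono)
    show "ennreal ((t + a) ^ n) \<le> ?S (a + 1) n t"
      using Suc.prems assms by (intro order.trans[OF ennreal_leI IH(3)] power_mono) auto
  qed (use IH(1) in auto)
  finally have lower: "ennreal ((t + a) ^ Suc n) \<le> ?S a (Suc n) t"
    unfolding rec .
  have "?S a (Suc n) t \<le> ennreal t * ennreal ((t + a + Suc n) ^ n) + ennreal a * ennreal ((t + a + Suc n) ^ n)"
    unfolding rec
  proof (intro add_mono mult_left_mono)
    show "?S (a + 1) n t \<le> ennreal ((t + a + Suc n) ^ n)"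
      using IH(4) by (simp add: add_ac)
    show "?S a n t \<le> ennreal ((t + a + Suc n) ^ n)"
      using Suc.prems assms by (intro order.trans[OF IH(2) ennreal_leI] power_mono) auto
  qed auto
  also have "\<dots> = ennreal ((t + a) * (t + a + Suc n) ^ n)"
    using Suc.prems assms
    by (simp add: ennreal_mult[symmetric] ennreal_plus[symmetric] algebra_simps del: ennreal_plus)
  also have "\<dots> \<le> ennreal ((t + a + Suc n) ^ Suc n)"
    using Suc.prems assms by (intro ennreal_leI) (simp add: mult_right_mono)
  finally show ?case using lower by simp
qed

lemma poisson_moment_bounds:
  assumes "t \<ge> 0"
  shows "ennreal (t ^ n) \<le> poisson_shifted_moment 0 n t"
    and "poisson_shifted_moment 0 n t \<le> ennreal ((t + n) ^ n)"
  using poisson_shifted_moment_bounds[OF order.refl assms, of n] by simp_all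

lemma poisson_moment_zero_rate:
  assumes "n \<ge> 1" shows "poisson_shifted_moment 0 n 0 = 0"
proof -
  have "(\<lambda>l. ennreal ((real l + 0) ^ n * poisson_prob 0 l)) = (\<lambda>_. 0)"
    using assms by (auto simp: poisson_prob_def fun_eq_iff)
  then show ?thesis by (simp add: poisson_shifted_moment_def)
qed

section \<open>Moments of nonnegative random variables\<close>

lemma integrable_power_iff_nn_integral:
  assumes "Z \<in> borel_measurable M" "\<forall>x\<in>space M. Z x \<ge> 0"
  shows "integrable M (\<lambda>x. Z x ^ n) \<longleftrightarrow> (\<integral>\<^sup>+x. ennreal (Z x ^ n) \<partial>M) < \<infinity>"
proof -
  have "(\<integral>\<^sup>+x. ennreal (norm (Z x ^ n)) \<partial>M) = (\<integral>\<^sup>+x. ennreal (Z x ^ n) \<partial>M)"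
    using assms(2) by (intro nn_integral_cong) auto
  then show ?thesis
    using assms(1) by (simp add: integrable_iff_bounded)
qed

lemma moment_eq_nn_integral:
  assumes "Z \<in> borel_measurable M" "\<forall>x\<in>space M. Z x \<ge> 0"
  shows "moment M Z n = enn2real (\<integral>\<^sup>+x. ennreal (Z x ^ n) \<partial>M)"
  unfolding moment_def using assms by (intro integral_eq_nn_integral) auto

lemma (in prob_space) moment_root_mono:
  assumes X: "X \<in> borel_measurable M" "\<forall>x\<in>space M. X x \<ge> 0"
    and int: "integrable M (\<lambda>x. X x ^ j)" "integrable M (\<lambda>x. X x ^ k)"
    and jk: "1 \<le> j" "j \<le> k"
  shows "root j (moment M X j) \<le> root k (moment M X k)"
proof -
  define p where "p = real k / real j"
  have p: "p \<ge> 1" "real j * p = real k"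
    using jk by (auto simp: p_def)
  have Xk: "\<bar>X x ^ j\<bar> powr p = X x ^ k" if "x \<in> space M" for x
    using X that jk nonneg_power_powr[of "X x" j k] by (simp add: p_def powr_realpow')
  have mj: "moment M X j \<ge> 0" and mk: "moment M X k \<ge> 0"
    using X by (simp_all add: moment_def integral_nonneg)
  have "integrable M (\<lambda>x. \<bar>X x ^ j\<bar> powr p)"
    using int(2) by (rule Bochner_Integration.integrable_cong[THEN iffD1, rotated 2]) (auto simp: Xk)
  then have "moment M X j powr p \<le> expectation (\<lambda>x. \<bar>X x ^ j\<bar> powr p)"
    using jensens_inequality[where X = "\<lambda>x. X x ^ j" and I = UNIV and q = "\<lambda>t. \<bar>t\<bar> powr p"]
      int(1) mj convex_on_abs_powr[OF p(1)]
    by (auto simp: moment_def)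
  also have "\<dots> = moment M X k"
    unfolding moment_def by (rule Bochner_Integration.integral_cong) (auto simp: Xk)
  finally have jensen: "moment M X j powr p \<le> moment M X k" .
  have "root j (moment M X j) = (moment M X j powr p) powr (1 / real k)"
    using mj jk by (simp add: root_powr_inverse powr_powr p_def)
  also have "\<dots> \<le> moment M X k powr (1 / real k)"
    using jensen mj by (intro powr_mono2) auto
  also have "\<dots> = root k (moment M X k)"
    using mk jk by (simp add: root_powr_inverse)
  finally show ?thesis .
qed

lemma carleman_iff_not_summable_root:
  assumes "\<forall>s. integrable M (\<lambda>x. Z x ^ s)" "\<And>s. moment M Z (2 * Suc s) > 0"
  shows "carleman M Z \<longleftrightarrow> \<not> summable (\<lambda>s. 1 / root (2 * Suc s) (moment M Z (2 * Suc s)))"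
proof -
  have "(\<lambda>s. moment M Z (2 * Suc s) powr (- 1 / real (2 * Suc s)))
      = (\<lambda>s. 1 / root (2 * Suc s) (moment M Z (2 * Suc s)))"
    by (intro ext powr_minus_inverse_eq_inverse_root assms(2)) simp
  then show ?thesis
    unfolding carleman_def using assms(1) assms(2)[THEN less_imp_neq] by auto
qed

lemma integrable_exp_iff_nn_integral:
  assumes "Z \<in> borel_measurable M"
  shows "integrable M (\<lambda>x. exp (w * Z x)) \<longleftrightarrow> (\<integral>\<^sup>+x. ennreal (exp (w * Z x)) \<partial>M) < \<infinity>"
  using assms by (simp add: integrable_iff_bounded)

lemma (in prob_space) mgf_exists_near_0_iff_pos:
  assumes Z: "Z \<in> borel_measurable M" "\<forall>x\<in>space M. Z x \<ge> 0"
  shows "mgf_exists_near_0 M Z \<longleftrightarrow> (\<exists>w>0. integrable M (\<lambda>x. exp (w * Z x)))"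
proof
  assume "mgf_exists_near_0 M Z"
  then obtain \<epsilon> where \<epsilon>: "\<epsilon> > 0"
    and int: "\<And>z. \<bar>z\<bar> < \<epsilon> \<Longrightarrow> integrable M (\<lambda>x. exp (z * Z x))"
    unfolding mgf_exists_near_0_def by blast
  have "integrable M (\<lambda>x. exp (\<epsilon> / 2 * Z x))"
    by (rule int) (use \<epsilon> in simp)
  with \<epsilon> show "\<exists>w>0. integrable M (\<lambda>x. exp (w * Z x))"
    by (intro exI[of _ "\<epsilon> / 2"]) simp
next
  assume "\<exists>w>0. integrable M (\<lambda>x. exp (w * Z x))"
  then obtain w where w: "w > 0" "integrable M (\<lambda>x. exp (w * Z x))"
    by blast
  have "integrable M (\<lambda>x. exp (z * Z x))" if "\<bar>z\<bar> < w" for z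
  proof (rule Bochner_Integration.integrable_bound[OF w(2)])
    show "AE x in M. norm (exp (z * Z x)) \<le> norm (exp (w * Z x))"
      using Z that by (auto intro!: AE_I2 mult_right_mono)
  qed (use Z in measurable)
  then show "mgf_exists_near_0 M Z"
    unfolding mgf_exists_near_0_def using w(1) by blast
qed

section \<open>Mixed Poisson variables\<close>

lemma nn_integral_mixed_poisson:
  assumes M: "prob_space M" and X: "X \<in> borel_measurable M" "\<forall>x\<in>space M. X x \<ge> 0"
    and \<rho>: "\<rho> \<ge> 0" and N: "prob_space N" and Y: "mixed_poisson M X \<rho> N Y"
  shows "(\<integral>\<^sup>+\<omega>. f (Y \<omega>) \<partial>N)
       = (\<integral>\<^sup>+x. (\<Sum>l. f l * ennreal (poisson_prob (\<rho> * X x) l)) \<partial>M)"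
proof -
  interpret M: prob_space M by (rule M)
  interpret N: prob_space N by (rule N)
  have Y_meas: "Y \<in> measurable N (count_space UNIV)"
    and Y_dist: "\<And>l. measure N {\<omega> \<in> space N. Y \<omega> = l}
                 = \<rho> ^ l / fact l * (\<integral>x. X x ^ l * exp (- \<rho> * X x) \<partial>M)"
    using Y by (auto simp: mixed_poisson_def)
  define A where "A l = {\<omega> \<in> space N. Y \<omega> = l}" for l
  have A_sets: "A l \<in> sets N" for l
    unfolding A_def using Y_meas by measurable
  define p where "p l x = poisson_prob (\<rho> * X x) l" for l x
  have p_meas: "p l \<in> borel_measurable M" for l
    unfolding p_def poisson_prob_def using X by measurable
  have p_bounds: "0 \<le> p l x" "p l x \<le> 1" if "x \<in> space M" for l x
    unfolding p_def using that X \<rho> by (auto intro: poisson_prob_nonneg poisson_prob_le_1)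
  have "(\<integral>x. p l x \<partial>M) = \<rho> ^ l / fact l * (\<integral>x. X x ^ l * exp (- \<rho> * X x) \<partial>M)" for l
    by (simp add: p_def poisson_prob_def power_mult_distrib field_simps)
  then have "emeasure N (A l) = ennreal (\<integral>x. p l x \<partial>M)" for l
    by (simp add: A_def N.emeasure_eq_measure Y_dist)
  also have "\<dots> l = (\<integral>\<^sup>+x. ennreal (p l x) \<partial>M)" for l
    using p_meas p_bounds
    by (intro nn_integral_eq_integral[symmetric] M.integrable_const_bound[of _ 1]) auto
  finally have A_prob: "emeasure N (A l) = (\<integral>\<^sup>+x. ennreal (p l x) \<partial>M)" for l .
  have "(\<integral>\<^sup>+\<omega>. f (Y \<omega>) \<partial>N) = (\<integral>\<^sup>+\<omega>. (\<Sum>l. f l * indicator (A l) \<omega>) \<partial>N)"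
  proof (rule nn_integral_cong)
    fix \<omega> assume "\<omega> \<in> space N"
    then have "(\<lambda>l. f l * indicator (A l) \<omega>) = (\<lambda>l. if l = Y \<omega> then f l else 0)"
      by (auto simp: A_def indicator_def)
    then show "f (Y \<omega>) = (\<Sum>l. f l * indicator (A l) \<omega>)"
      using sums_single[of "Y \<omega>" f] by (simp add: sums_unique)
  qed
  also have "\<dots> = (\<Sum>l. f l * emeasure N (A l))"
    using A_sets by (simp add: nn_integral_suminf nn_integral_cmult_indicator)
  also have "\<dots> = (\<integral>\<^sup>+x. (\<Sum>l. f l * ennreal (p l x)) \<partial>M)"
    using p_meas by (simp add: A_prob nn_integral_cmult nn_integral_suminf)
  finally show ?thesis unfolding p_def .
qed

locale mixed_poisson_setting =
  fixes M :: "'a measure" and X :: "'a \<Rightarrow> real" and \<rho> :: real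
    and N :: "'b measure" and Y :: "'b \<Rightarrow> nat"
  assumes M: "prob_space M" and X_measurable [measurable]: "X \<in> borel_measurable M"
    and X_nonneg: "\<forall>x\<in>space M. X x \<ge> 0"
    and \<rho>: "\<rho> > 0"
    and N: "prob_space N" and Y: "mixed_poisson M X \<rho> N Y"
begin

interpretation M: prob_space M by (rule M)
interpretation N: prob_space N by (rule N)

lemma Y_measurable [measurable]: "(\<lambda>\<omega>. real (Y \<omega>)) \<in> borel_measurable N"
proof -
  have "Y \<in> measurable N (count_space UNIV)"
    using Y by (simp add: mixed_poisson_def)
  then show ?thesis by measurable
qed

lemma \<rho>X_nonneg: "x \<in> space M \<Longrightarrow> \<rho> * X x \<ge> 0"
  using X_nonneg \<rho> by simp

lemma nn_integral_Y:
  "(\<integral>\<^sup>+\<omega>. f (Y \<omega>) \<partial>N) = (\<integral>\<^sup>+x. (\<Sum>l. f l * ennreal (poisson_prob (\<rho> * X x) l)) \<partial>M)"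
  using M X_measurable X_nonneg \<rho> N Y by (intro nn_integral_mixed_poisson) auto

lemma nn_moment_Y:
  "(\<integral>\<^sup>+\<omega>. ennreal (real (Y \<omega>) ^ n) \<partial>N) = (\<integral>\<^sup>+x. poisson_shifted_moment 0 n (\<rho> * X x) \<partial>M)"
  unfolding nn_integral_Y[where f = "\<lambda>l. ennreal (real l ^ n)"] poisson_shifted_moment_def
  by (intro nn_integral_cong suminf_cong) (auto simp: \<rho>X_nonneg poisson_prob_nonneg ennreal_mult)

lemma nn_mgf_Y:
  "(\<integral>\<^sup>+\<omega>. ennreal (exp (z * real (Y \<omega>))) \<partial>N)
     = (\<integral>\<^sup>+x. ennreal (exp ((exp z - 1) * \<rho> * X x)) \<partial>M)"
proof -
  have "ennreal (exp (z * real l)) * ennreal (poisson_prob t l) = ennreal (exp z ^ l * poisson_prob t l)"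
    if "t \<ge> 0" for t l
    using that by (simp add: ennreal_mult poisson_prob_nonneg exp_of_nat_mult[symmetric] mult.commute)
  then show ?thesis
    unfolding nn_integral_Y[where f = "\<lambda>l. ennreal (exp (z * real l))"]
    by (intro nn_integral_cong) (simp add: \<rho>X_nonneg poisson_generating_function mult.assoc)
qed

lemma nn_moment_Y_lower:
  "ennreal (\<rho> ^ n) * (\<integral>\<^sup>+x. ennreal (X x ^ n) \<partial>M) \<le> (\<integral>\<^sup>+\<omega>. ennreal (real (Y \<omega>) ^ n) \<partial>N)"
proof -
  have "ennreal (\<rho> ^ n) * (\<integral>\<^sup>+x. ennreal (X x ^ n) \<partial>M) = (\<integral>\<^sup>+x. ennreal ((\<rho> * X x) ^ n) \<partial>M)"
    using X_nonneg \<rho>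
    by (subst nn_integral_cmult[symmetric]) (auto intro!: nn_integral_cong simp: ennreal_mult power_mult_distrib)
  also have "\<dots> \<le> (\<integral>\<^sup>+x. poisson_shifted_moment 0 n (\<rho> * X x) \<partial>M)"
    by (intro nn_integral_mono poisson_moment_bounds \<rho>X_nonneg)
  finally show ?thesis
    unfolding nn_moment_Y .
qed

lemma nn_moment_Y_upper:
  "(\<integral>\<^sup>+\<omega>. ennreal (real (Y \<omega>) ^ n) \<partial>N)
     \<le> ennreal (2 ^ n * \<rho> ^ n) * (\<integral>\<^sup>+x. ennreal (X x ^ n) \<partial>M) + ennreal (2 ^ n * real n ^ n)"
proof -
  have "(\<integral>\<^sup>+\<omega>. ennreal (real (Y \<omega>) ^ n) \<partial>N) \<le> (\<integral>\<^sup>+x. ennreal ((\<rho> * X x + n) ^ n) \<partial>M)"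
    unfolding nn_moment_Y
    by (intro nn_integral_mono poisson_moment_bounds \<rho>X_nonneg)
  also have "\<dots> \<le> (\<integral>\<^sup>+x. ennreal (2 ^ n * \<rho> ^ n) * ennreal (X x ^ n) + ennreal (2 ^ n * real n ^ n) \<partial>M)"
  proof (rule nn_integral_mono)
    fix x assume x: "x \<in> space M"
    have "(\<rho> * X x + n) ^ n \<le> 2 ^ n * \<rho> ^ n * X x ^ n + 2 ^ n * real n ^ n"
      using power_add_le_two_pow[OF \<rho>X_nonneg[OF x], of n n]
      by (simp add: algebra_simps power_mult_distrib)
    then show "ennreal ((\<rho> * X x + n) ^ n) \<le> ennreal (2 ^ n * \<rho> ^ n) * ennreal (X x ^ n) + ennreal (2 ^ n * real n ^ n)"
      using X_nonneg x \<rho> by (simp add: ennreal_mult[symmetric] ennreal_plus[symmetric] del: ennreal_plus)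
  qed
  also have "\<dots> = ennreal (2 ^ n * \<rho> ^ n) * (\<integral>\<^sup>+x. ennreal (X x ^ n) \<partial>M) + ennreal (2 ^ n * real n ^ n)"
    by (simp add: nn_integral_add nn_integral_cmult M.emeasure_space_1)
  finally show ?thesis .
qed

lemma nn_moment_Y_eq_0:
  assumes "n \<ge> 1" "(\<integral>\<^sup>+x. ennreal (X x ^ n) \<partial>M) = 0"
  shows "(\<integral>\<^sup>+\<omega>. ennreal (real (Y \<omega>) ^ n) \<partial>N) = 0"
proof -
  have "AE x in M. X x = 0"
    using assms X_nonneg by (subst (asm) nn_integral_0_iff_AE) auto
  then have "AE x in M. poisson_shifted_moment 0 n (\<rho> * X x) = 0"
    by (rule eventually_mono) (simp add: poisson_moment_zero_rate[OF assms(1)])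
  then show ?thesis
    unfolding nn_moment_Y using nn_integral_cong_AE by fastforce
qed

lemma integrable_power_Y_iff:
  "integrable N (\<lambda>\<omega>. real (Y \<omega>) ^ n) \<longleftrightarrow> integrable M (\<lambda>x. X x ^ n)"
proof -
  let ?JX = "\<integral>\<^sup>+x. ennreal (X x ^ n) \<partial>M" and ?JY = "\<integral>\<^sup>+\<omega>. ennreal (real (Y \<omega>) ^ n) \<partial>N"
  have "?JY < \<infinity> \<longleftrightarrow> ?JX < \<infinity>"
  proof
    assume "?JY < \<infinity>"
    then have "ennreal (\<rho> ^ n) * ?JX < \<infinity>"
      using nn_moment_Y_lower by (rule le_less_trans[rotated])
    then show "?JX < \<infinity>"
      using \<rho> by (auto simp: ennreal_mult_less_top)
  next
    assume "?JX < \<infinity>"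
    then have "ennreal (2 ^ n * \<rho> ^ n) * ?JX + ennreal (2 ^ n * real n ^ n) < \<infinity>"
      by (simp add: ennreal_mult_less_top)
    then show "?JY < \<infinity>"
      using nn_moment_Y_upper by (rule le_less_trans[rotated])
  qed
  then show ?thesis
    by (simp add: integrable_power_iff_nn_integral X_nonneg)
qed

lemma moment_Y_bounds:
  assumes "integrable M (\<lambda>x. X x ^ n)"
  shows "\<rho> ^ n * moment M X n \<le> moment N (\<lambda>\<omega>. real (Y \<omega>)) n"
    and "moment N (\<lambda>\<omega>. real (Y \<omega>)) n \<le> 2 ^ n * (\<rho> ^ n * moment M X n + real n ^ n)"
proof -
  let ?a = "moment M X n" and ?c = "moment N (\<lambda>\<omega>. real (Y \<omega>)) n"
  have a: "(\<integral>\<^sup>+x. ennreal (X x ^ n) \<partial>M) = ennreal ?a" "?a \<ge> 0"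
    using assms by (simp_all add: moment_eq_nn_integral integrable_power_iff_nn_integral X_nonneg)
  have c: "(\<integral>\<^sup>+\<omega>. ennreal (real (Y \<omega>) ^ n) \<partial>N) = ennreal ?c" "?c \<ge> 0"
    using assms integrable_power_Y_iff[of n]
    by (simp_all add: moment_eq_nn_integral integrable_power_iff_nn_integral)
  show "\<rho> ^ n * ?a \<le> ?c"
    using nn_moment_Y_lower[of n] \<rho> a c by (simp add: ennreal_mult[symmetric] ennreal_le_iff)
  show "?c \<le> 2 ^ n * (\<rho> ^ n * ?a + real n ^ n)"
    using nn_moment_Y_upper[of n] \<rho> a c
    by (simp add: ennreal_mult[symmetric] ennreal_plus[symmetric] ennreal_le_iff algebra_simps
        del: ennreal_plus)
qed

lemma moment_Y_eq_0:
  assumes "integrable M (\<lambda>x. X x ^ n)" "n \<ge> 1" "moment M X n = 0"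
  shows "moment N (\<lambda>\<omega>. real (Y \<omega>)) n = 0"
proof -
  have "(\<integral>\<^sup>+x. ennreal (X x ^ n) \<partial>M) = 0"
    using assms by (auto simp: moment_eq_nn_integral integrable_power_iff_nn_integral X_nonneg
        enn2real_eq_0_iff)
  then show ?thesis
    using nn_moment_Y_eq_0[OF assms(2)] by (simp add: moment_eq_nn_integral)
qed

lemma root_moment_Y_bounds:
  assumes "integrable M (\<lambda>x. X x ^ n)" "n > 0"
  shows "\<rho> * root n (moment M X n) \<le> root n (moment N (\<lambda>\<omega>. real (Y \<omega>)) n)"
    and "root n (moment N (\<lambda>\<omega>. real (Y \<omega>)) n) \<le> 2 * (\<rho> * root n (moment M X n) + n)"
proof -
  let ?a = "moment M X n" and ?c = "moment N (\<lambda>\<omega>. real (Y \<omega>)) n"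
  define r where "r = root n ?a"
  have "?a \<ge> 0"
    using X_nonneg by (simp add: moment_def integral_nonneg)
  then have r: "r \<ge> 0" "r ^ n = ?a"
    using assms(2) by (simp_all add: r_def)
  have "\<rho> * r = root n (\<rho> ^ n * ?a)"
    using \<rho> assms(2) by (simp add: r_def real_root_mult real_root_power_cancel)
  also have "\<dots> \<le> root n ?c"
    using moment_Y_bounds(1)[OF assms(1)] assms(2) by simp
  finally show "\<rho> * r \<le> root n ?c" .
  have "?c \<le> 2 ^ n * ((\<rho> * r) ^ n + real n ^ n)"
    using moment_Y_bounds(2)[OF assms(1)] by (simp add: r power_mult_distrib)
  also have "\<dots> \<le> 2 ^ n * (\<rho> * r + n) ^ n"
    using add_pow_le_pow_add[of "\<rho> * r" "real n" n] \<rho> r assms(2) by simp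
  also have "\<dots> = (2 * (\<rho> * r + n)) ^ n"
    by (simp only: power_mult_distrib)
  finally have "root n ?c \<le> root n ((2 * (\<rho> * r + n)) ^ n)"
    using assms(2) by simp
  also have "\<dots> = 2 * (\<rho> * r + n)"
    using \<rho> r assms(2) by (intro real_root_power_cancel) auto
  finally show "root n ?c \<le> 2 * (\<rho> * r + n)" .
qed

lemma carleman_Y_iff: "carleman N (\<lambda>\<omega>. real (Y \<omega>)) \<longleftrightarrow> carleman M X"
proof (cases "\<forall>s. integrable M (\<lambda>x. X x ^ s)")
  case False
  then show ?thesis
    by (auto simp: carleman_def integrable_power_Y_iff)
next
  case int: True
  let ?a = "\<lambda>s. moment M X (2 * Suc s)" and ?c = "\<lambda>s. moment N (\<lambda>\<omega>. real (Y \<omega>)) (2 * Suc s)"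
  have int_Y: "\<forall>s. integrable N (\<lambda>\<omega>. real (Y \<omega>) ^ s)"
    using int by (simp add: integrable_power_Y_iff)
  show ?thesis
  proof (cases "\<exists>s. ?a s = 0")
    case True
    then have "\<exists>s. ?c s = 0"
      using int moment_Y_eq_0 by fastforce
    then show ?thesis
      using True int int_Y by (simp add: carleman_def)
  next
    case False
    define \<alpha> where "\<alpha> s = root (2 * Suc s) (?a s)" for s
    define \<beta> where "\<beta> s = root (2 * Suc s) (?c s)" for s
    have a_pos: "?a s > 0" for s
      using False X_nonneg by (simp add: moment_def integral_nonneg order_le_neq_trans)
    have c_pos: "?c s > 0" for s
      using a_pos[of s] \<rho> moment_Y_bounds(1)[of "2 * Suc s"] int
      by (meson less_le_trans mult_pos_pos zero_less_power)
    have \<alpha>_pos: "\<alpha> s > 0" for s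
      using a_pos by (simp add: \<alpha>_def)
    have "mono \<alpha>"
      unfolding \<alpha>_def by (intro monoI M.moment_root_mono X_measurable X_nonneg int[rule_format]) auto
    moreover have "\<rho> * \<alpha> s \<le> \<beta> s" for s
      unfolding \<alpha>_def \<beta>_def by (intro root_moment_Y_bounds(1) int[rule_format]) auto
    moreover have "\<beta> s \<le> (2 * (\<rho> + 2)) * max (\<alpha> s) (real (Suc s))" for s
    proof -
      have "\<beta> s \<le> 2 * (\<rho> * \<alpha> s + real (2 * Suc s))"
        unfolding \<alpha>_def \<beta>_def by (intro root_moment_Y_bounds(2) int[rule_format]) auto
      also have "\<dots> \<le> 2 * (\<rho> * max (\<alpha> s) (real (Suc s)) + 2 * max (\<alpha> s) (real (Suc s)))"
        using \<rho> by (intro mult_left_mono add_mono) (auto simp: max_def)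
      finally show ?thesis
        by (simp add: algebra_simps)
    qed
    ultimately have "summable (\<lambda>s. 1 / \<beta> s) \<longleftrightarrow> summable (\<lambda>s. 1 / \<alpha> s)"
      using \<alpha>_pos \<rho> by (intro summable_inverse_iff_of_comparable)
    then show ?thesis
      using a_pos c_pos int int_Y
      by (simp add: carleman_iff_not_summable_root \<alpha>_def \<beta>_def del: mult_Suc_right)
  qed
qed

lemma integrable_exp_Y_iff:
  "integrable N (\<lambda>\<omega>. exp (z * real (Y \<omega>))) \<longleftrightarrow> integrable M (\<lambda>x. exp ((exp z - 1) * \<rho> * X x))"
  by (simp add: integrable_exp_iff_nn_integral nn_mgf_Y mult.assoc)

lemma mgf_exists_near_0_Y_iff:
  "mgf_exists_near_0 M X \<longleftrightarrow> mgf_exists_near_0 N (\<lambda>\<omega>. real (Y \<omega>))"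
proof -
  have "(\<exists>w>0. integrable M (\<lambda>x. exp (w * X x)))
      \<longleftrightarrow> (\<exists>z>0. integrable M (\<lambda>x. exp ((exp z - 1) * \<rho> * X x)))"
  proof
    assume "\<exists>w>0. integrable M (\<lambda>x. exp (w * X x))"
    then obtain w where w: "w > 0" "integrable M (\<lambda>x. exp (w * X x))"
      by blast
    define z where "z = ln (1 + w / \<rho>)"
    have "1 + w / \<rho> > 1"
      using w(1) \<rho> by simp
    then have "z > 0" "(exp z - 1) * \<rho> = w"
      using \<rho> by (simp_all add: z_def ln_gt_zero)
    then show "\<exists>z>0. integrable M (\<lambda>x. exp ((exp z - 1) * \<rho> * X x))"
      using w(2) by auto
  next
    assume "\<exists>z>0. integrable M (\<lambda>x. exp ((exp z - 1) * \<rho> * X x))"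
    then obtain z where "z > 0" "integrable M (\<lambda>x. exp ((exp z - 1) * \<rho> * X x))"
      by blast
    moreover have "(exp z - 1) * \<rho> > 0"
      using \<open>z > 0\<close> \<rho> by simp
    ultimately show "\<exists>w>0. integrable M (\<lambda>x. exp (w * X x))"
      by blast
  qed
  then show ?thesis
    by (simp add: M.mgf_exists_near_0_iff_pos N.mgf_exists_near_0_iff_pos X_nonneg
        integrable_exp_Y_iff)
qed

end

theorem lemma1:
  fixes M :: "'a measure" and X :: "'a \<Rightarrow> real" and \<rho> :: real
    and N :: "'b measure" and Y :: "'b \<Rightarrow> nat"
  assumes "prob_space M" and "X \<in> borel_measurable M"
    and "\<forall>x\<in>space M. X x \<ge> 0"
    and "\<rho> > 0"
    and "prob_space N" and "mixed_poisson M X \<rho> N Y"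
  shows "(carleman N (\<lambda>\<omega>. real (Y \<omega>)) \<longleftrightarrow> carleman M X) \<and>
         (mgf_exists_near_0 M X \<longleftrightarrow> mgf_exists_near_0 N (\<lambda>\<omega>. real (Y \<omega>)))"
proof -
  interpret mixed_poisson_setting M X \<rho> N Y
    using assms by (rule mixed_poisson_setting.intro)
  show ?thesis
    using carleman_Y_iff mgf_exists_near_0_Y_iff by blast
qed

end
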